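(* Let $g\in L^2(\mathbb{R}^3)$, $\theta\in\mathbb{R}$ and $(u_0,\alpha_0)\in L^2(\mathbb{R}^3)\oplus L^2(\mathbb{R}^3)$. If $(u_\theta,\alpha_\theta)\in C^0(\mathbb{R},L^2\oplus L^2)$ is a solution of $$u_\theta(x)=u_0(x)\exp\Big\{-i\int_0^\theta (A_g)_\tau(x)d\tau\Big\},\qquad \alpha_\theta(k)=\alpha_0(k)-ig(k)\int_0^\theta F(|u_\tau|^2)(k)d\tau,$$ then it is unique: any $(v_\theta,\beta_\theta)\in C^0(\mathbb{R},L^2\oplus L^2)$ satisfying the same system with the same initial datum equals $(u_\theta,\alpha_\theta)$.
   Context: $(A_g)_\tau(x)=\int_{\mathbb{R}^3}\big(g(k)\bar\alpha_\tau(k)e^{-ik\cdot x}+\bar g(k)\alpha_\tau(k)e^{ik\cdot x}\big)dk$ and $F(|u|^2)(k)=\int_{\mathbb{R}^3}e^{-ik\cdot x}|u(x)|^2dx$. *)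

theory Defs
  imports "HOL-Analysis.Analysis"
begin

text \<open>Elements of L^2(R^3) are represented by (Lebesgue measurable, square integrable)
  functions R^3 to C; equality in L^2 is equality almost everywhere.\<close>

definition L2 :: "(real^3 \<Rightarrow> complex) set" where
  "L2 = {f. f \<in> borel_measurable lebesgue \<and> integrable lebesgue (\<lambda>x. (cmod (f x))\<^sup>2)}"

definition L2_norm :: "(real^3 \<Rightarrow> complex) \<Rightarrow> real" where
  "L2_norm f = sqrt (integral\<^sup>L lebesgue (\<lambda>x. (cmod (f x))\<^sup>2))"

definition L2_continuous :: "(real \<Rightarrow> real^3 \<Rightarrow> complex) \<Rightarrow> bool" where
  "L2_continuous f \<longleftrightarrow> (\<forall>t. f t \<in> L2) \<and>
     (\<forall>t. ((\<lambda>s. L2_norm (\<lambda>x. f s x - f t x)) \<longlongrightarrow> 0) (at t))"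

definition A_field :: "(real^3 \<Rightarrow> complex) \<Rightarrow> (real \<Rightarrow> real^3 \<Rightarrow> complex) \<Rightarrow> real \<Rightarrow> real^3 \<Rightarrow> complex" where
  "A_field g \<alpha> \<tau> x = integral\<^sup>L lebesgue
     (\<lambda>k. g k * cnj (\<alpha> \<tau> k) * exp (- \<i> * of_real (k \<bullet> x)) + cnj (g k) * \<alpha> \<tau> k * exp (\<i> * of_real (k \<bullet> x)))"

definition Fourier :: "(real^3 \<Rightarrow> real) \<Rightarrow> real^3 \<Rightarrow> complex" where
  "Fourier h k = integral\<^sup>L lebesgue (\<lambda>x. exp (- \<i> * of_real (k \<bullet> x)) * of_real (h x))"

definition is_solution ::
  "(real^3 \<Rightarrow> complex) \<Rightarrow> (real^3 \<Rightarrow> complex) \<Rightarrow> (real^3 \<Rightarrow> complex) \<Rightarrow>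
   (real \<Rightarrow> real^3 \<Rightarrow> complex) \<Rightarrow> (real \<Rightarrow> real^3 \<Rightarrow> complex) \<Rightarrow> bool" where
  "is_solution g u0 \<alpha>0 u \<alpha> \<longleftrightarrow>
     (\<forall>\<theta>::real. AE x in lebesgue. u \<theta> x = u0 x *
        exp (- \<i> * interval_lebesgue_integral lborel (ereal 0) (ereal \<theta>) (\<lambda>\<tau>. A_field g \<alpha> \<tau> x))) \<and>
     (\<forall>\<theta>::real. AE k in lebesgue. \<alpha> \<theta> k = \<alpha>0 k -
        \<i> * g k * interval_lebesgue_integral lborel (ereal 0) (ereal \<theta>)
          (\<lambda>\<tau>. Fourier (\<lambda>x. (cmod (u \<tau> x))\<^sup>2) k))"

end

theory Submission
  imports Defs
begin

text \<open>The vector potential is real, so the first equation only rotates the phase of \<open>u\<^sub>0\<close>: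
  every solution has \<open>|u\<^sub>\<theta>| = |u\<^sub>0|\<close> almost everywhere. Hence the source term
  \<open>F(|u\<^sub>\<tau>|\<^sup>2)\<close> of the second equation equals \<open>F(|u\<^sub>0|\<^sup>2)\<close>, so the second equation gives
  \<open>\<alpha>\<^sub>\<theta>\<close> explicitly in terms of the data, and then the first equation gives \<open>u\<^sub>\<theta>\<close>.\<close>

lemma A_field_real: "A_field g a t x = complex_of_real (Re (A_field g a t x))"
proof -
  have integrand_real:
    "g k * cnj (a t k) * exp (- \<i> * of_real (k \<bullet> x)) + cnj (g k) * a t k * exp (\<i> * of_real (k \<bullet> x))
     = complex_of_real (2 * Re (g k * cnj (a t k) * exp (- \<i> * of_real (k \<bullet> x))))" for k
  proof -
    let ?z = "g k * cnj (a t k) * exp (- \<i> * of_real (k \<bullet> x))"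
    have "cnj (exp (- \<i> * of_real (k \<bullet> x))) = exp (\<i> * of_real (k \<bullet> x))"
      by (simp add: exp_cnj)
    then have "cnj ?z = cnj (g k) * a t k * exp (\<i> * of_real (k \<bullet> x))"
      by (simp only: complex_cnj_mult complex_cnj_cnj)
    then show ?thesis
      by (metis complex_add_cnj)
  qed
  show ?thesis
    unfolding A_field_def integrand_real integral_complex_of_real by simp
qed

lemma norm_exp_minus_i_interval_integral_real:
  fixes f :: "real \<Rightarrow> complex"
  assumes "\<And>t. f t = complex_of_real (Re (f t))"
  shows "cmod (exp (- \<i> * interval_lebesgue_integral M a b f)) = 1"
proof -
  have "f = (\<lambda>t. complex_of_real (Re (f t)))"
    using assms by (rule ext)
  then have "interval_lebesgue_integral M a b f
      = complex_of_real (interval_lebesgue_integral M a b (\<lambda>t. Re (f t)))"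
    by (metis interval_lebesgue_integral_of_real)
  then show ?thesis by simp
qed

lemma is_solution_cmod_AE:
  assumes "is_solution g u0 \<alpha>0 u \<alpha>"
  shows "AE x in lebesgue. cmod (u \<theta> x) = cmod (u0 x)"
proof -
  have "AE x in lebesgue. u \<theta> x = u0 x *
      exp (- \<i> * interval_lebesgue_integral lborel (ereal 0) (ereal \<theta>) (\<lambda>\<tau>. A_field g \<alpha> \<tau> x))"
    using assms by (simp add: is_solution_def)
  then show ?thesis
    by eventually_elim
      (simp only: norm_mult norm_exp_minus_i_interval_integral_real[OF A_field_real] mult_1_right)
qed

lemma borel_measurable_lebesgue_ident [measurable]:
  "(\<lambda>x::'a::euclidean_space. x) \<in> borel_measurable lebesgue"
  using id_borel_measurable_lebesgue by (simp add: id_def)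

lemma borel_measurable_cnj [measurable]:
  "f \<in> borel_measurable M \<Longrightarrow> (\<lambda>x. cnj (f x)) \<in> borel_measurable M"
  by (rule borel_measurable_continuous_on[OF continuous_on_cnj[OF continuous_on_id]])

lemma Fourier_cong_AE:
  assumes "h \<in> borel_measurable lebesgue" and "h' \<in> borel_measurable lebesgue"
    and "AE x in lebesgue. h x = h' x"
  shows "Fourier h k = Fourier h' k"
  unfolding Fourier_def
proof (rule integral_cong_AE)
  show "(\<lambda>x. exp (- \<i> * of_real (k \<bullet> x)) * of_real (h x)) \<in> borel_measurable lebesgue"
    and "(\<lambda>x. exp (- \<i> * of_real (k \<bullet> x)) * of_real (h' x)) \<in> borel_measurable lebesgue"
    using assms(1,2) by measurable
  show "AE x in lebesgue. exp (- \<i> * of_real (k \<bullet> x)) * of_real (h x)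
      = exp (- \<i> * of_real (k \<bullet> x)) * of_real (h' x)"
    using assms(3) by eventually_elim simp
qed

lemma is_solution_Fourier_density:
  assumes "is_solution g u0 \<alpha>0 u \<alpha>"
    and "u \<tau> \<in> borel_measurable lebesgue" and "u0 \<in> borel_measurable lebesgue"
  shows "Fourier (\<lambda>x. (cmod (u \<tau> x))\<^sup>2) k = Fourier (\<lambda>x. (cmod (u0 x))\<^sup>2) k"
proof (rule Fourier_cong_AE)
  show "(\<lambda>x. (cmod (u \<tau> x))\<^sup>2) \<in> borel_measurable lebesgue"
    and "(\<lambda>x. (cmod (u0 x))\<^sup>2) \<in> borel_measurable lebesgue"
    using assms(2,3) by measurable
  show "AE x in lebesgue. (cmod (u \<tau> x))\<^sup>2 = (cmod (u0 x))\<^sup>2"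
    using is_solution_cmod_AE[OF assms(1)] by eventually_elim simp
qed

lemma is_solution_field_explicit:
  assumes "is_solution g u0 \<alpha>0 u \<alpha>"
    and "\<And>\<tau>. u \<tau> \<in> borel_measurable lebesgue" and "u0 \<in> borel_measurable lebesgue"
  shows "AE k in lebesgue. \<alpha> \<theta> k = \<alpha>0 k -
    \<i> * g k * interval_lebesgue_integral lborel (ereal 0) (ereal \<theta>)
      (\<lambda>\<tau>. Fourier (\<lambda>x. (cmod (u0 x))\<^sup>2) k)"
  using assms(1) is_solution_Fourier_density[OF assms(1,2,3)]
  by (simp add: is_solution_def)

lemma A_field_cong_AE:
  assumes "g \<in> borel_measurable lebesgue"
    and "a \<tau> \<in> borel_measurable lebesgue" and "b \<tau> \<in> borel_measurable lebesgue"
    and "AE k in lebesgue. a \<tau> k = b \<tau> k"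
  shows "A_field g a \<tau> x = A_field g b \<tau> x"
  unfolding A_field_def
proof (rule integral_cong_AE)
  show "(\<lambda>k. g k * cnj (a \<tau> k) * exp (- \<i> * of_real (k \<bullet> x))
      + cnj (g k) * a \<tau> k * exp (\<i> * of_real (k \<bullet> x))) \<in> borel_measurable lebesgue"
    and "(\<lambda>k. g k * cnj (b \<tau> k) * exp (- \<i> * of_real (k \<bullet> x))
      + cnj (g k) * b \<tau> k * exp (\<i> * of_real (k \<bullet> x))) \<in> borel_measurable lebesgue"
    using assms(1,2,3) by measurable
  show "AE k in lebesgue. g k * cnj (a \<tau> k) * exp (- \<i> * of_real (k \<bullet> x))
      + cnj (g k) * a \<tau> k * exp (\<i> * of_real (k \<bullet> x))
    = g k * cnj (b \<tau> k) * exp (- \<i> * of_real (k \<bullet> x))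
      + cnj (g k) * b \<tau> k * exp (\<i> * of_real (k \<bullet> x))"
    using assms(4) by eventually_elim simp
qed

lemma L2_continuous_measurable: "L2_continuous f \<Longrightarrow> f t \<in> borel_measurable lebesgue"
  by (simp add: L2_continuous_def L2_def)

theorem proposition3:
  fixes g u0 \<alpha>0 :: "real^3 \<Rightarrow> complex"
    and u \<alpha> v \<beta> :: "real \<Rightarrow> real^3 \<Rightarrow> complex"
  assumes "g \<in> L2" and "u0 \<in> L2" and "\<alpha>0 \<in> L2"
    and "L2_continuous u" and "L2_continuous \<alpha>" and "is_solution g u0 \<alpha>0 u \<alpha>"
    and "L2_continuous v" and "L2_continuous \<beta>" and "is_solution g u0 \<alpha>0 v \<beta>"
  shows "\<forall>\<theta>::real. (AE x in lebesgue. v \<theta> x = u \<theta> x) \<and> (AE k in lebesgue. \<beta> \<theta> k = \<alpha> \<theta> k)"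
proof (intro allI conjI)
  fix \<theta> :: real
  have g_meas: "g \<in> borel_measurable lebesgue" and u0_meas: "u0 \<in> borel_measurable lebesgue"
    using assms(1,2) by (simp_all add: L2_def)
  have fields_eq: "AE k in lebesgue. \<beta> \<tau> k = \<alpha> \<tau> k" for \<tau>
    using is_solution_field_explicit[OF assms(6) L2_continuous_measurable[OF assms(4)] u0_meas,
        where \<theta> = \<tau>]
      is_solution_field_explicit[OF assms(9) L2_continuous_measurable[OF assms(7)] u0_meas,
        where \<theta> = \<tau>]
    by eventually_elim simp
  then show "AE k in lebesgue. \<beta> \<theta> k = \<alpha> \<theta> k" .
  have potentials_eq: "A_field g \<beta> \<tau> x = A_field g \<alpha> \<tau> x" for \<tau> x
    using A_field_cong_AE[OF g_meas L2_continuous_measurable[OF assms(8)]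
        L2_continuous_measurable[OF assms(5)] fields_eq] .
  have "AE x in lebesgue. u \<theta> x = u0 x *
      exp (- \<i> * interval_lebesgue_integral lborel (ereal 0) (ereal \<theta>) (\<lambda>\<tau>. A_field g \<alpha> \<tau> x))"
    and "AE x in lebesgue. v \<theta> x = u0 x *
      exp (- \<i> * interval_lebesgue_integral lborel (ereal 0) (ereal \<theta>) (\<lambda>\<tau>. A_field g \<beta> \<tau> x))"
    using assms(6,9) by (simp_all add: is_solution_def)
  then show "AE x in lebesgue. v \<theta> x = u \<theta> x"
    by eventually_elim (simp add: potentials_eq)
qed

end
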